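(* Let $G=(V,E)$ and $G'=(V',E')$ be graphs, and let $(u,v)$ be an ordered edge of $G$ and $(u',v')$ an ordered edge of $G'$. Then for every $t\ge0$: (1) If $\mathrm{eb}^{(t)}(G)=\mathrm{eb}^{(t)}(G')$, then $\mathrm{tp}^t(G)=\mathrm{tp}^t(G')$. (2) If $\mathrm{eb}^{(t)}(G,(u,v))=\mathrm{eb}^{(t)}(G',(u',v'))$ and $\mathrm{eb}^{(t)}(G)=\mathrm{eb}^{(t)}(G')$, then $\mathrm{tp}^t(G,u)=\mathrm{tp}^t(G',u')$, $\mathrm{tp}^t(G,v)=\mathrm{tp}^t(G',v')$, and $\mathrm{tp}^t(G,(u,v))=\mathrm{tp}^t(G',(u',v'))$.
   Context: All graphs are finite, simple and undirected, without isolated vertices; $N(v)$ denotes the neighborhood of $v$. An ordered edge of $G=(V,E)$ is a pair $(u,v)$ with $\{u,v\}\in E$. EB-1WL coloring: $\mathrm{eb}^{(0)}(G,(u,v))=1$ for every ordered edge, and $\mathrm{eb}^{(\ell+1)}(G,(u,v)) = \big(\mathrm{eb}^{(\ell)}(G,(u,v)),\ \{\!\{\mathrm{eb}^{(\ell)}(G,(u,x)) : x\in N(u)\}\!\},\ \{\!\{(\mathrm{eb}^{(\ell)}(G,(u,y)),\mathrm{eb}^{(\ell)}(G,(v,y))) : y\in N(u)\cap N(v)\}\!\},\ \{\!\{\mathrm{eb}^{(\ell)}(G,(v,z)) : z\in N(v)\}\!\}\big)$. $\mathrm{eb}^{(t)}(G)$ is the multiset of $\mathrm{eb}^{(t)}(G,(u,v))$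 over all ordered edges $(u,v)$ of $G$. Logic: first-order logic over the vocabulary with one binary relation $E$, where $E(x,y)$ holds of $(u,v)$ iff $\{u,v\}$ is an edge. For a tuple $\bar x=(x_1,\dots,x_n)$ of distinct variables, $\mathrm{clique}(\bar x):=\bigwedge_{1\le i<j\le n}E(x_i,x_j)$ (empty conjunction = true). CFOC is the smallest set of formulas such that: (1) $\mathrm{clique}(\bar x)$ is in CFOC; (2) if $\phi(\bar x)\in$ CFOC then $\mathrm{clique}(\bar x)\wedge\neg\phi(\bar x)\in$ CFOC; (3) if $\phi(\bar x),\psi(\bar y)\in$ CFOC then $\mathrm{clique}(\bar z)\wedge(\phi(\bar x)\star\psi(\bar y))\in$ CFOC for $\star\in\{\wedge,\vee\}$, where $\bar z$ lists each variable of $\bar x$ and $\bar y$ exactly once; (4) if $\phi(\bar x,y)\in$ CFOC then $\mathrm{clique}(\bar x)\wedge\exists^{\ge k}y\,\phi(\bar x,y)\in$ CFOC for every integer $k\ge1$ ($\exists^{\ge k}$: at least $k$ witnesses). $\mathrm{CFOC}^3$: CFOC formulas using at most three distinct variables. For a graph $G$ and a tuple $\bar v$ of vertices (possibly empty), the $t$-type $\mathrm{tp}^t(G,\bar v)$ is the set of $\mathrm{CFOC}^3$ formulas $\phi(\bar x)$ of quantifier depth $t$ (with $|\bar x|=|\bar v|$) such that $G\models\phi(\bar v)$; $\mathrm{tp}^t(G)$ is the set of such sentences true in $G$. *)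

theory Defs
  imports Main "HOL-Library.Multiset"
begin

definition graph :: "'a set \<Rightarrow> ('a \<Rightarrow> 'a \<Rightarrow> bool) \<Rightarrow> bool" where
  "graph V E \<longleftrightarrow> finite V \<and> (\<forall>x y. E x y \<longrightarrow> x \<in> V \<and> y \<in> V)
     \<and> (\<forall>x y. E x y \<longrightarrow> E y x) \<and> (\<forall>x. \<not> E x x) \<and> (\<forall>x\<in>V. \<exists>y. E x y)"

definition nbh :: "'a set \<Rightarrow> ('a \<Rightarrow> 'a \<Rightarrow> bool) \<Rightarrow> 'a \<Rightarrow> 'a set" where
  "nbh V E x = {y \<in> V. E x y}"

definition ordered_edges :: "'a set \<Rightarrow> ('a \<Rightarrow> 'a \<Rightarrow> bool) \<Rightarrow> ('a \<times> 'a) set" where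
  "ordered_edges V E = {(u, v). u \<in> V \<and> v \<in> V \<and> E u v}"

datatype ebcol = EB0
  | EBS ebcol "ebcol multiset" "(ebcol \<times> ebcol) multiset" "ebcol multiset"

primrec eb :: "nat \<Rightarrow> 'a set \<Rightarrow> ('a \<Rightarrow> 'a \<Rightarrow> bool) \<Rightarrow> 'a \<Rightarrow> 'a \<Rightarrow> ebcol" where
  "eb 0 V E u v = EB0"
| "eb (Suc l) V E u v =
     EBS (eb l V E u v)
         (image_mset (\<lambda>x. eb l V E u x) (mset_set (nbh V E u)))
         (image_mset (\<lambda>y. (eb l V E u y, eb l V E v y)) (mset_set (nbh V E u \<inter> nbh V E v)))
         (image_mset (\<lambda>z. eb l V E v z) (mset_set (nbh V E v)))"

definition eb_graph :: "nat \<Rightarrow> 'a set \<Rightarrow> ('a \<Rightarrow> 'a \<Rightarrow> bool) \<Rightarrow> ebcol multiset" where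
  "eb_graph t V E = image_mset (\<lambda>(u, v). eb t V E u v) (mset_set (ordered_edges V E))"

text \<open>Syntax: each constructor carries the tuple of free variables (the clique guard).\<close>
datatype fm = Clq "nat list" | Neg "nat list" fm | Conj "nat list" fm fm
  | Disj "nat list" fm fm | Ex "nat list" nat nat fm

inductive cfoc :: "nat list \<Rightarrow> fm \<Rightarrow> bool" where
  clq: "distinct xs \<Longrightarrow> cfoc xs (Clq xs)"
| neg: "cfoc xs f \<Longrightarrow> cfoc xs (Neg xs f)"
| conj: "cfoc xs f \<Longrightarrow> cfoc ys g \<Longrightarrow> distinct zs \<Longrightarrow> set zs = set xs \<union> set ys
          \<Longrightarrow> cfoc zs (Conj zs f g)"
| disj: "cfoc xs f \<Longrightarrow> cfoc ys g \<Longrightarrow> distinct zs \<Longrightarrow> set zs = set xs \<union> set ys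
          \<Longrightarrow> cfoc zs (Disj zs f g)"
| ex: "cfoc (xs @ [y]) f \<Longrightarrow> k \<ge> 1 \<Longrightarrow> cfoc xs (Ex xs y k f)"

primrec fvars :: "fm \<Rightarrow> nat set" where
  "fvars (Clq xs) = set xs"
| "fvars (Neg xs f) = set xs \<union> fvars f"
| "fvars (Conj xs f g) = set xs \<union> fvars f \<union> fvars g"
| "fvars (Disj xs f g) = set xs \<union> fvars f \<union> fvars g"
| "fvars (Ex xs y k f) = set xs \<union> {y} \<union> fvars f"

primrec qdepth :: "fm \<Rightarrow> nat" where
  "qdepth (Clq xs) = 0"
| "qdepth (Neg xs f) = qdepth f"
| "qdepth (Conj xs f g) = max (qdepth f) (qdepth g)"
| "qdepth (Disj xs f g) = max (qdepth f) (qdepth g)"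
| "qdepth (Ex xs y k f) = Suc (qdepth f)"

definition clique_sat :: "('a \<Rightarrow> 'a \<Rightarrow> bool) \<Rightarrow> (nat \<Rightarrow> 'a) \<Rightarrow> nat list \<Rightarrow> bool" where
  "clique_sat E \<sigma> xs \<longleftrightarrow> (\<forall>i j. i < j \<and> j < length xs \<longrightarrow> E (\<sigma> (xs ! i)) (\<sigma> (xs ! j)))"

primrec sat :: "'a set \<Rightarrow> ('a \<Rightarrow> 'a \<Rightarrow> bool) \<Rightarrow> (nat \<Rightarrow> 'a) \<Rightarrow> fm \<Rightarrow> bool" where
  "sat V E \<sigma> (Clq xs) = clique_sat E \<sigma> xs"
| "sat V E \<sigma> (Neg xs f) = (clique_sat E \<sigma> xs \<and> \<not> sat V E \<sigma> f)"
| "sat V E \<sigma> (Conj xs f g) = (clique_sat E \<sigma> xs \<and> sat V E \<sigma> f \<and> sat V E \<sigma> g)"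
| "sat V E \<sigma> (Disj xs f g) = (clique_sat E \<sigma> xs \<and> (sat V E \<sigma> f \<or> sat V E \<sigma> g))"
| "sat V E \<sigma> (Ex xs y k f) =
     (clique_sat E \<sigma> xs \<and> k \<le> card {w \<in> V. sat V E (\<sigma>(y := w)) f})"

definition assign :: "nat list \<Rightarrow> 'a list \<Rightarrow> nat \<Rightarrow> 'a" where
  "assign xs vs x = (case map_of (zip xs vs) x of Some w \<Rightarrow> w | None \<Rightarrow> undefined)"

definition tp :: "nat \<Rightarrow> 'a set \<Rightarrow> ('a \<Rightarrow> 'a \<Rightarrow> bool) \<Rightarrow> 'a list \<Rightarrow> (nat list \<times> fm) set" where
  "tp t V E vs = {(xs, f). cfoc xs f \<and> card (fvars f) \<le> 3 \<and> qdepth f \<le> t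
                    \<and> length xs = length vs \<and> sat V E (assign xs vs) f}"

end

theory Submission
  imports Defs
begin

text \<open>
  Induct on the CFOC formula, carrying the invariant that the two assignments of the free
  variables induce the same adjacencies and the same EB colours of round s on the assigned
  vertices and on the edges between them, where s bounds the remaining quantifier depth.
  The only interesting case is a counting quantifier: its clique guard confines the witnesses
  to the common neighbours of the at most two other free variables, and the multiset of
  colours of these candidates is visible to EB-1WL.  With no free variable it is the multiset
  of vertex colours, which the edge colours of the whole graph determine because there are no
  isolated vertices; with one variable it is the neighbourhood component of that vertex's
  colour, with two adjacent ones the common-neighbour component of their edge colour.
  Candidates of equal colour are interchangeable by induction, so the two graphs have equally
  many witnesses.
\<close>

fun ebcol_prev :: "ebcol \<Rightarrow> ebcol" where
  "ebcol_prev EB0 = EB0"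
| "ebcol_prev (EBS c _ _ _) = c"

lemma eb_graph_eq_ebcol_prev: "eb_graph r V E = image_mset ebcol_prev (eb_graph (Suc r) V E)"
  by (simp add: eb_graph_def multiset.map_comp comp_def split_def)

lemma eb_graph_eq_mono:
  assumes "s \<le> t" and "eb_graph t V E = eb_graph t V' E'"
  shows "eb_graph s V E = eb_graph s V' E'"
  using assms(1)
proof (induction s rule: inc_induct)
  case base
  show ?case by (rule assms(2))
next
  case (step s)
  have "eb_graph s V E = image_mset ebcol_prev (eb_graph (Suc s) V E)"
    by (rule eb_graph_eq_ebcol_prev)
  also have "\<dots> = image_mset ebcol_prev (eb_graph (Suc s) V' E')"
    using step.IH by (rule arg_cong)
  also have "\<dots> = eb_graph s V' E'"
    by (rule eb_graph_eq_ebcol_prev[symmetric])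
  finally show ?case .
qed

text \<open>EB-1WL colours only edges; \<open>vcol r a\<close> is the part of \<open>eb r a b\<close> that depends on
  \<open>a\<close> alone.\<close>

fun vcol :: "nat \<Rightarrow> 'a set \<Rightarrow> ('a \<Rightarrow> 'a \<Rightarrow> bool) \<Rightarrow> 'a \<Rightarrow> ebcol multiset" where
  "vcol 0 V E a = {#}"
| "vcol (Suc r) V E a = image_mset (eb r V E a) (mset_set (nbh V E a))"

lemma eb_eq_swap:
  "eb r V E a b = eb r V' E' a' b' \<Longrightarrow> eb r V E b a = eb r V' E' b' a'"
proof (induction r arbitrary: a b a' b')
  case 0
  then show ?case by simp
next
  case (Suc r)
  have common_swap:
    "image_mset (\<lambda>y. (eb r V E b y, eb r V E a y)) (mset_set (nbh V E b \<inter> nbh V E a))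
     = image_mset prod.swap
         (image_mset (\<lambda>y. (eb r V E a y, eb r V E b y)) (mset_set (nbh V E a \<inter> nbh V E b)))"
    for V :: "'x set" and E a b
    by (simp add: multiset.map_comp comp_def Int_commute)
  from Suc.prems have
      same: "eb r V E a b = eb r V' E' a' b'"
    and nbrs: "vcol (Suc r) V E a = vcol (Suc r) V' E' a'"
      "vcol (Suc r) V E b = vcol (Suc r) V' E' b'"
    and common:
      "image_mset (\<lambda>y. (eb r V E a y, eb r V E b y)) (mset_set (nbh V E a \<inter> nbh V E b))
       = image_mset (\<lambda>y. (eb r V' E' a' y, eb r V' E' b' y)) (mset_set (nbh V' E' a' \<inter> nbh V' E' b'))"
    by simp_all
  have "image_mset (\<lambda>y. (eb r V E b y, eb r V E a y)) (mset_set (nbh V E b \<inter> nbh V E a))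
      = image_mset (\<lambda>y. (eb r V' E' b' y, eb r V' E' a' y)) (mset_set (nbh V' E' b' \<inter> nbh V' E' a'))"
    unfolding common_swap[of V E b a] common_swap[of V' E' b' a'] common ..
  with Suc.IH[OF same] nbrs show ?case
    by simp
qed

lemma vcol_eq_if_eb_eq: "eb r V E a b = eb r V' E' a' b' \<Longrightarrow> vcol r V E a = vcol r V' E' a'"
  by (cases r) auto

lemma vcol_eq_SucD: "vcol (Suc r) V E a = vcol (Suc r) V' E' a' \<Longrightarrow> vcol r V E a = vcol r V' E' a'"
proof (cases r)
  case (Suc q)
  have "vcol r V E a = image_mset ebcol_prev (vcol (Suc r) V E a)" for V :: "'x set" and E a
    using Suc by (simp add: multiset.map_comp comp_def)
  then show "vcol (Suc r) V E a = vcol (Suc r) V' E' a' \<Longrightarrow> ?thesis" by metis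
qed simp

lemma size_filter_image_mset_set:
  "finite A \<Longrightarrow> size (filter_mset P (image_mset f (mset_set A))) = card {x \<in> A. P (f x)}"
  by (simp add: filter_mset_image_mset)

lemma count_image_mset_mset_set:
  "finite A \<Longrightarrow> count (image_mset f (mset_set A)) c = card {x \<in> A. f x = c}"
  by (simp add: count_image_mset Int_def vimage_def conj_commute)

lemma card_filter_eq_if_image_mset_eq:
  assumes "finite A" "finite A'" and "image_mset \<kappa> (mset_set A) = image_mset \<kappa>' (mset_set A')"
    and "\<And>w w'. w \<in> A \<Longrightarrow> w' \<in> A' \<Longrightarrow> \<kappa> w = \<kappa>' w' \<Longrightarrow> P w = P' w'"
  shows "card {w \<in> A. P w} = card {w \<in> A'. P' w}"
proof -
  \<comment> \<open>Both P and P' factor through the colours as R.\<close>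
  define R where "R c \<longleftrightarrow> (\<exists>w\<in>A. \<kappa> w = c \<and> P w)" for c
  have same_image: "\<kappa> ` A = \<kappa>' ` A'"
    using arg_cong[OF assms(3), of set_mset] assms(1,2) by simp
  have P_R: "{w \<in> A. P w} = {w \<in> A. R (\<kappa> w)}"
  proof -
    have "P w \<longleftrightarrow> R (\<kappa> w)" if "w \<in> A" for w
    proof -
      from that same_image obtain w' where "w' \<in> A'" "\<kappa>' w' = \<kappa> w"
        by (metis imageE imageI)
      with assms(4) have "P v = P' w'" if "v \<in> A" "\<kappa> v = \<kappa> w" for v
        using that by metis
      with \<open>w \<in> A\<close> show ?thesis
        unfolding R_def by blast
    qed
    then show ?thesis by blast
  qed
  have P'_R: "{w \<in> A'. P' w} = {w \<in> A'. R (\<kappa>' w)}"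
  proof -
    have "P' w' \<longleftrightarrow> R (\<kappa>' w')" if "w' \<in> A'" for w'
    proof -
      from that same_image obtain w where "w \<in> A" "\<kappa> w = \<kappa>' w'"
        by (metis imageE imageI)
      with assms(4) \<open>w' \<in> A'\<close> have "P v = P' w'" if "v \<in> A" "\<kappa> v = \<kappa>' w'" for v
        using that by metis
      with \<open>w \<in> A\<close> \<open>\<kappa> w = \<kappa>' w'\<close> show ?thesis
        unfolding R_def by blast
    qed
    then show ?thesis by blast
  qed
  have "card {w \<in> A. P w} = size (filter_mset R (image_mset \<kappa> (mset_set A)))"
    using assms(1) by (simp add: P_R size_filter_image_mset_set)
  also have "\<dots> = size (filter_mset R (image_mset \<kappa>' (mset_set A')))"
    using assms(3) by simp
  also have "\<dots> = card {w \<in> A'. P' w}"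
    using assms(2) by (simp add: P'_R size_filter_image_mset_set)
  finally show ?thesis .
qed

lemma graph_finite: "graph V E \<Longrightarrow> finite V"
  by (simp add: graph_def)

lemma graph_edgeD: "graph V E \<Longrightarrow> E x y \<Longrightarrow> x \<in> V \<and> y \<in> V"
  by (simp add: graph_def)

lemma graph_sym: "graph V E \<Longrightarrow> E x y \<Longrightarrow> E y x"
  by (simp add: graph_def)

lemma graph_nbh_nonempty: "graph V E \<Longrightarrow> x \<in> V \<Longrightarrow> nbh V E x \<noteq> {}"
  unfolding graph_def nbh_def by blast

lemma finite_nbh: "finite V \<Longrightarrow> finite (nbh V E x)"
  by (simp add: nbh_def)

lemma finite_ordered_edges: "finite V \<Longrightarrow> finite (ordered_edges V E)"
  by (rule finite_subset[of _ "V \<times> V"]) (auto simp: ordered_edges_def)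

fun ebcol_fst_nbrs :: "ebcol \<Rightarrow> ebcol multiset" where
  "ebcol_fst_nbrs EB0 = {#}"
| "ebcol_fst_nbrs (EBS _ m _ _) = m"

lemma count_vcol_mset:
  assumes "graph V E"
  shows "count (image_mset (vcol (Suc r) V E) (mset_set V)) m
       = count (image_mset ebcol_fst_nbrs (eb_graph (Suc r) V E)) m div size m"
proof -
  define S where "S = {a \<in> V. vcol (Suc r) V E a = m}"
  have "image_mset ebcol_fst_nbrs (eb_graph (Suc r) V E)
      = image_mset (\<lambda>p. vcol (Suc r) V E (fst p)) (mset_set (ordered_edges V E))"
    by (simp add: eb_graph_def multiset.map_comp comp_def split_def)
  then have "count (image_mset ebcol_fst_nbrs (eb_graph (Suc r) V E)) m
      = card {p \<in> ordered_edges V E. vcol (Suc r) V E (fst p) = m}"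
    using assms by (simp add: count_image_mset_mset_set finite_ordered_edges graph_finite)
  also have "{p \<in> ordered_edges V E. vcol (Suc r) V E (fst p) = m} = Sigma S (nbh V E)"
    by (auto simp: S_def ordered_edges_def nbh_def)
  also have "card (Sigma S (nbh V E)) = (\<Sum>a\<in>S. card (nbh V E a))"
    using assms by (intro card_SigmaI) (auto simp: S_def graph_finite finite_nbh)
  also have "\<dots> = (\<Sum>a\<in>S. size (vcol (Suc r) V E a))"
    by simp
  also have "\<dots> = card S * size m"
    by (simp add: S_def)
  finally have edges:
    "count (image_mset ebcol_fst_nbrs (eb_graph (Suc r) V E)) m = card S * size m" .
  \<comment> \<open>For \<open>size m = 0\<close> both sides vanish: \<open>n div 0 = 0\<close>, and no vertex has the empty
    colour as there are no isolated vertices.\<close>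
  have "S = {}" if "size m = 0"
    using that assms
    by (auto simp: S_def mset_set_empty_iff graph_finite finite_nbh graph_nbh_nonempty)
  moreover have "count (image_mset (vcol (Suc r) V E) (mset_set V)) m = card S"
    using assms by (simp add: S_def count_image_mset_mset_set graph_finite)
  ultimately show ?thesis
    using edges by (cases "size m = 0") auto
qed

lemma vcol_mset_eq_if_eb_graph_eq:
  assumes "graph V E" "graph V' E'" "eb_graph (Suc r) V E = eb_graph (Suc r) V' E'"
  shows "image_mset (vcol (Suc r) V E) (mset_set V) = image_mset (vcol (Suc r) V' E') (mset_set V')"
  by (rule multiset_eqI) (simp add: count_vcol_mset assms)

lemma card_vertices_eq:
  assumes "graph V E" "graph V' E'" "eb_graph (Suc r) V E = eb_graph (Suc r) V' E'"
    and "\<And>w w'. w \<in> V \<Longrightarrow> w' \<in> V' \<Longrightarrow> vcol r V E w = vcol r V' E' w' \<Longrightarrow> P w = P' w'"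
  shows "card {w \<in> V. P w} = card {w \<in> V'. P' w}"
proof (rule card_filter_eq_if_image_mset_eq)
  show "finite V" "finite V'"
    using assms(1,2) by (simp_all add: graph_finite)
  show "image_mset (vcol (Suc r) V E) (mset_set V) = image_mset (vcol (Suc r) V' E') (mset_set V')"
    by (rule vcol_mset_eq_if_eb_graph_eq[OF assms(1-3)])
next
  fix w w' assume w: "w \<in> V" "w' \<in> V'" "vcol (Suc r) V E w = vcol (Suc r) V' E' w'"
  show "P w = P' w'"
    by (rule assms(4)[OF w(1,2) vcol_eq_SucD[OF w(3)]])
qed

lemma card_nbh_eq:
  assumes "finite V" "finite V'" "vcol (Suc r) V E a = vcol (Suc r) V' E' a'"
    and "\<And>w w'. w \<in> nbh V E a \<Longrightarrow> w' \<in> nbh V' E' a' \<Longrightarrow> vcol r V E w = vcol r V' E' w'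
      \<Longrightarrow> eb r V E a w = eb r V' E' a' w' \<Longrightarrow> P w = P' w'"
  shows "card {w \<in> nbh V E a. P w} = card {w \<in> nbh V' E' a'. P' w}"
proof (rule card_filter_eq_if_image_mset_eq)
  show "finite (nbh V E a)" "finite (nbh V' E' a')"
    using assms(1,2) by (simp_all add: finite_nbh)
  show "image_mset (eb r V E a) (mset_set (nbh V E a))
      = image_mset (eb r V' E' a') (mset_set (nbh V' E' a'))"
    using assms(3) by simp
next
  fix w w' assume w: "w \<in> nbh V E a" "w' \<in> nbh V' E' a'" "eb r V E a w = eb r V' E' a' w'"
  show "P w = P' w'"
    by (rule assms(4)[OF w(1,2) vcol_eq_if_eb_eq[OF eb_eq_swap[OF w(3)]] w(3)])
qed

lemma card_common_nbh_pair_eq: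
  assumes "finite V" "finite V'" "eb (Suc r) V E a b = eb (Suc r) V' E' a' b'"
    and "\<And>w w'. w \<in> nbh V E a \<inter> nbh V E b \<Longrightarrow> w' \<in> nbh V' E' a' \<inter> nbh V' E' b'
      \<Longrightarrow> vcol r V E w = vcol r V' E' w' \<Longrightarrow> eb r V E a w = eb r V' E' a' w'
      \<Longrightarrow> eb r V E b w = eb r V' E' b' w' \<Longrightarrow> P w = P' w'"
  shows "card {w \<in> nbh V E a \<inter> nbh V E b. P w} = card {w \<in> nbh V' E' a' \<inter> nbh V' E' b'. P' w}"
proof (rule card_filter_eq_if_image_mset_eq)
  show "finite (nbh V E a \<inter> nbh V E b)" "finite (nbh V' E' a' \<inter> nbh V' E' b')"
    using assms(1,2) by (simp_all add: finite_nbh)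
  show "image_mset (\<lambda>w. (eb r V E a w, eb r V E b w)) (mset_set (nbh V E a \<inter> nbh V E b))
      = image_mset (\<lambda>w. (eb r V' E' a' w, eb r V' E' b' w)) (mset_set (nbh V' E' a' \<inter> nbh V' E' b'))"
    using assms(3) by simp
next
  fix w w' assume w: "w \<in> nbh V E a \<inter> nbh V E b" "w' \<in> nbh V' E' a' \<inter> nbh V' E' b'"
    and "(eb r V E a w, eb r V E b w) = (eb r V' E' a' w', eb r V' E' b' w')"
  then have eq: "eb r V E a w = eb r V' E' a' w'" "eb r V E b w = eb r V' E' b' w'"
    by simp_all
  show "P w = P' w'"
    by (rule assms(4)[OF w vcol_eq_if_eb_eq[OF eb_eq_swap[OF eq(1)]] eq])
qed

lemma cfoc_distinct: "cfoc xs f \<Longrightarrow> distinct xs"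
  by (induction rule: cfoc.induct) auto

lemma finite_fvars: "finite (fvars f)"
  by (induction f) auto

lemma card_le_if_subset_fvars: "A \<subseteq> fvars f \<Longrightarrow> card (fvars f) \<le> n \<Longrightarrow> card A \<le> n"
  by (meson card_mono finite_fvars le_trans)

lemma cfoc_sat_clique_sat: "cfoc xs f \<Longrightarrow> sat V E \<sigma> f \<Longrightarrow> clique_sat E \<sigma> xs"
  by (erule cfoc.cases; clarsimp)

lemma clique_sat_nthD:
  "clique_sat E \<sigma> xs \<Longrightarrow> i < j \<Longrightarrow> j < length xs \<Longrightarrow> E (\<sigma> (xs ! i)) (\<sigma> (xs ! j))"
  by (simp add: clique_sat_def)

lemma cfoc_sat_witness_adjacent:
  assumes "cfoc (xs @ [y]) f" and "sat V E (\<sigma>(y := w)) f" and "x \<in> set xs"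
  shows "E (\<sigma> x) w"
proof -
  define \<tau> where "\<tau> = \<sigma>(y := w)"
  from assms(3) obtain i where i: "i < length xs" "xs ! i = x"
    by (auto simp: in_set_conv_nth)
  have clique: "clique_sat E \<tau> (xs @ [y])"
    unfolding \<tau>_def by (rule cfoc_sat_clique_sat[OF assms(1,2)])
  have "E (\<tau> ((xs @ [y]) ! i)) (\<tau> ((xs @ [y]) ! length xs))"
    using clique_sat_nthD[OF clique, of i "length xs"] i by simp
  moreover have "y \<noteq> x"
    using cfoc_distinct[OF assms(1)] assms(3) by auto
  ultimately show ?thesis
    using i by (simp add: \<tau>_def nth_append)
qed

definition eb_agree :: "nat \<Rightarrow> 'a set \<Rightarrow> ('a \<Rightarrow> 'a \<Rightarrow> bool) \<Rightarrow> 'b set \<Rightarrow> ('b \<Rightarrow> 'b \<Rightarrow> bool)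
    \<Rightarrow> nat set \<Rightarrow> (nat \<Rightarrow> 'a) \<Rightarrow> (nat \<Rightarrow> 'b) \<Rightarrow> bool" where
  "eb_agree s V E V' E' X \<sigma> \<sigma>' \<longleftrightarrow>
     (\<forall>x\<in>X. \<sigma> x \<in> V \<and> \<sigma>' x \<in> V' \<and> vcol s V E (\<sigma> x) = vcol s V' E' (\<sigma>' x)) \<and>
     (\<forall>x\<in>X. \<forall>y\<in>X. x \<noteq> y \<longrightarrow> (E (\<sigma> x) (\<sigma> y) \<longleftrightarrow> E' (\<sigma>' x) (\<sigma>' y)) \<and>
        (E (\<sigma> x) (\<sigma> y) \<longrightarrow> eb s V E (\<sigma> x) (\<sigma> y) = eb s V' E' (\<sigma>' x) (\<sigma>' y)))"

lemma eb_agree_subset: "eb_agree s V E V' E' X \<sigma> \<sigma>' \<Longrightarrow> Y \<subseteq> X \<Longrightarrow> eb_agree s V E V' E' Y \<sigma> \<sigma>'"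
  unfolding eb_agree_def by blast

lemma eb_agree_SucD:
  assumes "eb_agree (Suc s) V E V' E' X \<sigma> \<sigma>'"
  shows "eb_agree s V E V' E' X \<sigma> \<sigma>'"
proof -
  have "vcol s V E (\<sigma> x) = vcol s V' E' (\<sigma>' x)" if "x \<in> X" for x
    using assms that unfolding eb_agree_def by (blast intro: vcol_eq_SucD)
  moreover have "eb s V E (\<sigma> x) (\<sigma> y) = eb s V' E' (\<sigma>' x) (\<sigma>' y)"
    if "x \<in> X" "y \<in> X" "x \<noteq> y" "E (\<sigma> x) (\<sigma> y)" for x y
  proof -
    have "eb (Suc s) V E (\<sigma> x) (\<sigma> y) = eb (Suc s) V' E' (\<sigma>' x) (\<sigma>' y)"
      using assms that unfolding eb_agree_def by blast
    then show ?thesis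
      by simp
  qed
  ultimately show ?thesis
    using assms unfolding eb_agree_def by blast
qed

lemma clique_sat_eq_if_eb_agree:
  assumes "distinct xs" and "eb_agree s V E V' E' (set xs) \<sigma> \<sigma>'"
  shows "clique_sat E \<sigma> xs = clique_sat E' \<sigma>' xs"
proof -
  have "E (\<sigma> (xs ! i)) (\<sigma> (xs ! j)) \<longleftrightarrow> E' (\<sigma>' (xs ! i)) (\<sigma>' (xs ! j))"
    if "i < j" "j < length xs" for i j
    using assms(2) nth_mem[of i xs] nth_mem[of j xs] nth_eq_iff_index_eq[OF assms(1), of i j] that
    unfolding eb_agree_def by auto
  then show ?thesis
    unfolding clique_sat_def by blast
qed

lemma eb_agree_extend:
  assumes "graph V E" "graph V' E'" and "eb_agree r V E V' E' X \<sigma> \<sigma>'" and "y \<notin> X"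
    and "w \<in> V" "w' \<in> V'" and "vcol r V E w = vcol r V' E' w'"
    and "\<And>x. x \<in> X \<Longrightarrow> E (\<sigma> x) w \<and> E' (\<sigma>' x) w' \<and> eb r V E (\<sigma> x) w = eb r V' E' (\<sigma>' x) w'"
  shows "eb_agree r V E V' E' (insert y X) (\<sigma>(y := w)) (\<sigma>'(y := w'))"
proof -
  have "E w (\<sigma> x) \<and> E' w' (\<sigma>' x) \<and> eb r V E w (\<sigma> x) = eb r V' E' w' (\<sigma>' x)" if "x \<in> X" for x
  proof -
    from assms(8)[OF that]
    have adj: "E (\<sigma> x) w" "E' (\<sigma>' x) w'" and eq: "eb r V E (\<sigma> x) w = eb r V' E' (\<sigma>' x) w'"
      by simp_all
    show ?thesis
      using graph_sym[OF assms(1) adj(1)] graph_sym[OF assms(2) adj(2)] eb_eq_swap[OF eq] by simp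
  qed
  moreover have "y \<noteq> x" if "x \<in> X" for x
    using assms(4) that by blast
  ultimately show ?thesis
    using assms(3-8) unfolding eb_agree_def by simp
qed

definition common_nbh :: "'a set \<Rightarrow> ('a \<Rightarrow> 'a \<Rightarrow> bool) \<Rightarrow> 'a set \<Rightarrow> 'a set" where
  "common_nbh V E S = {w \<in> V. \<forall>a\<in>S. E a w}"

lemma common_nbh_simps:
  "common_nbh V E {} = V" "common_nbh V E {a} = nbh V E a"
  "common_nbh V E {a, b} = nbh V E a \<inter> nbh V E b"
  by (auto simp: common_nbh_def nbh_def)

lemma card_common_nbh_eq:
  assumes g: "graph V E" "graph V' E'" and "eb_graph (Suc r) V E = eb_graph (Suc r) V' E'"
    and agree: "eb_agree (Suc r) V E V' E' (set xs) \<sigma> \<sigma>'"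
    and "distinct xs" "length xs \<le> 2" "clique_sat E \<sigma> xs"
    and P: "\<And>w w'. w \<in> common_nbh V E (\<sigma> ` set xs) \<Longrightarrow> w' \<in> common_nbh V' E' (\<sigma>' ` set xs)
      \<Longrightarrow> vcol r V E w = vcol r V' E' w' \<Longrightarrow> (\<forall>x\<in>set xs. eb r V E (\<sigma> x) w = eb r V' E' (\<sigma>' x) w')
      \<Longrightarrow> P w = P' w'"
  shows "card {w \<in> common_nbh V E (\<sigma> ` set xs). P w}
       = card {w \<in> common_nbh V' E' (\<sigma>' ` set xs). P' w}"
proof -
  have fin: "finite V" "finite V'"
    using g by (simp_all add: graph_finite)
  from \<open>length xs \<le> 2\<close> consider "xs = []" | x where "xs = [x]" | x1 x2 where "xs = [x1, x2]"
    by (cases xs rule: remdups_adj.cases) auto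
  then show ?thesis
  proof cases
    case 1
    with card_vertices_eq[OF assms(1-3)] P show ?thesis
      by (simp add: common_nbh_simps)
  next
    case (2 x)
    have "vcol (Suc r) V E (\<sigma> x) = vcol (Suc r) V' E' (\<sigma>' x)"
      using agree 2 unfolding eb_agree_def by (simp del: vcol.simps)
    with card_nbh_eq[OF fin] P 2 show ?thesis
      by (simp add: common_nbh_simps)
  next
    case (3 x1 x2)
    have "E (\<sigma> x1) (\<sigma> x2)"
      using clique_sat_nthD[OF \<open>clique_sat E \<sigma> xs\<close>, of 0 1] 3 by simp
    with agree 3 \<open>distinct xs\<close>
    have "eb (Suc r) V E (\<sigma> x1) (\<sigma> x2) = eb (Suc r) V' E' (\<sigma>' x1) (\<sigma>' x2)"
      unfolding eb_agree_def by (simp del: eb.simps)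
    with card_common_nbh_pair_eq[OF fin] P 3 show ?thesis
      by (simp add: common_nbh_simps)
  qed
qed

lemma sat_eq_if_eb_agree:
  assumes g: "graph V E" "graph V' E'" and geq: "eb_graph t V E = eb_graph t V' E'"
  shows "cfoc xs f \<Longrightarrow> card (fvars f) \<le> 3 \<Longrightarrow> qdepth f \<le> s \<Longrightarrow> s \<le> t
    \<Longrightarrow> eb_agree s V E V' E' (set xs) \<sigma> \<sigma>' \<Longrightarrow> sat V E \<sigma> f = sat V' E' \<sigma>' f"
proof (induction xs f arbitrary: s \<sigma> \<sigma>' rule: cfoc.induct)
  case (clq xs)
  then show ?case
    by (simp add: clique_sat_eq_if_eb_agree)
next
  case (neg xs f)
  have "card (fvars f) \<le> 3"
    by (intro card_le_if_subset_fvars[OF _ neg.prems(1)]) auto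
  with neg have "sat V E \<sigma> f = sat V' E' \<sigma>' f"
    by simp
  with neg show ?case
    by (simp add: clique_sat_eq_if_eb_agree cfoc_distinct)
next
  case (conj xs f ys g zs)
  have card: "card (fvars f) \<le> 3" "card (fvars g) \<le> 3"
    by (intro card_le_if_subset_fvars[OF _ conj.prems(1)]; auto)+
  have agree: "eb_agree s V E V' E' (set xs) \<sigma> \<sigma>'" "eb_agree s V E V' E' (set ys) \<sigma> \<sigma>'"
    using conj.hyps(4) by (simp_all add: eb_agree_subset[OF conj.prems(4)])
  have "sat V E \<sigma> f = sat V' E' \<sigma>' f" "sat V E \<sigma> g = sat V' E' \<sigma>' g"
    by (intro conj.IH[of s]; use card agree conj.prems(2,3) in simp)+
  with conj show ?case
    by (simp add: clique_sat_eq_if_eb_agree)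
next
  case (disj xs f ys g zs)
  have card: "card (fvars f) \<le> 3" "card (fvars g) \<le> 3"
    by (intro card_le_if_subset_fvars[OF _ disj.prems(1)]; auto)+
  have agree: "eb_agree s V E V' E' (set xs) \<sigma> \<sigma>'" "eb_agree s V E V' E' (set ys) \<sigma> \<sigma>'"
    using disj.hyps(4) by (simp_all add: eb_agree_subset[OF disj.prems(4)])
  have "sat V E \<sigma> f = sat V' E' \<sigma>' f" "sat V E \<sigma> g = sat V' E' \<sigma>' g"
    by (intro disj.IH[of s]; use card agree disj.prems(2,3) in simp)+
  with disj show ?case
    by (simp add: clique_sat_eq_if_eb_agree)
next
  case (ex xs y f k s \<sigma> \<sigma>')
  from ex.prems(2) obtain r where s: "s = Suc r"
    by (cases s) auto
  have geq_r: "eb_graph (Suc r) V E = eb_graph (Suc r) V' E'"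
    using eb_graph_eq_mono[OF _ geq] ex.prems(3) s by simp
  have agree: "eb_agree (Suc r) V E V' E' (set xs) \<sigma> \<sigma>'"
    using ex.prems(4) s by simp
  have dxy: "distinct (xs @ [y])"
    by (rule cfoc_distinct[OF ex.hyps(1)])
  then have y: "y \<notin> set xs" and dx: "distinct xs"
    by auto
  have "card (set (xs @ [y])) \<le> 3"
    by (intro card_le_if_subset_fvars[OF _ ex.prems(1)]) auto
  \<comment> \<open>This is where the bound of three variables enters.\<close>
  with dxy have len: "length xs \<le> 2"
    by (simp add: distinct_card)
  have IH: "sat V E (\<sigma>(y := w)) f = sat V' E' (\<sigma>'(y := w')) f"
    if "eb_agree r V E V' E' (insert y (set xs)) (\<sigma>(y := w)) (\<sigma>'(y := w'))" for w w'
  proof (rule ex.IH[of r])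
    show "card (fvars f) \<le> 3"
      by (intro card_le_if_subset_fvars[OF _ ex.prems(1)]) auto
  qed (use ex.prems(2,3) s that in \<open>simp_all add: fun_upd_def\<close>)
  have witnesses: "{w \<in> W. sat W F (\<tau>(y := w)) f}
      = {w \<in> common_nbh W F (\<tau> ` set xs). sat W F (\<tau>(y := w)) f}"
    for W :: "'x set" and F \<tau>
    by (auto simp: common_nbh_def dest: cfoc_sat_witness_adjacent[OF ex.hyps(1)])
  show ?case
  proof (cases "clique_sat E \<sigma> xs")
    case True
    have "card {w \<in> common_nbh V E (\<sigma> ` set xs). sat V E (\<sigma>(y := w)) f}
        = card {w \<in> common_nbh V' E' (\<sigma>' ` set xs). sat V' E' (\<sigma>'(y := w)) f}"
    proof (rule card_common_nbh_eq[OF g geq_r agree dx len True])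
      fix w w' assume "w \<in> common_nbh V E (\<sigma> ` set xs)" "w' \<in> common_nbh V' E' (\<sigma>' ` set xs)"
        and "vcol r V E w = vcol r V' E' w'" "\<forall>x\<in>set xs. eb r V E (\<sigma> x) w = eb r V' E' (\<sigma>' x) w'"
      then show "sat V E (\<sigma>(y := w)) f = sat V' E' (\<sigma>'(y := w')) f"
        by (intro IH eb_agree_extend[OF g eb_agree_SucD[OF agree] y]) (auto simp: common_nbh_def)
    qed
    with True show ?thesis
      by (simp add: witnesses clique_sat_eq_if_eb_agree[OF dx agree])
  qed (simp add: clique_sat_eq_if_eb_agree[OF dx agree])
qed

lemma tp_eq_if_eb_agree:
  assumes "graph V E" "graph V' E'" "eb_graph t V E = eb_graph t V' E'" "length vs = length vs'"
    and "\<And>xs. distinct xs \<Longrightarrow> length xs = length vs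
      \<Longrightarrow> eb_agree t V E V' E' (set xs) (assign xs vs) (assign xs vs')"
  shows "tp t V E vs = tp t V' E' vs'"
proof -
  have "sat V E (assign xs vs) f = sat V' E' (assign xs vs') f"
    if "cfoc xs f" "card (fvars f) \<le> 3" "qdepth f \<le> t" "length xs = length vs" for xs f
    using sat_eq_if_eb_agree[OF assms(1-3) that(1-3) order_refl assms(5)] cfoc_distinct that
    by simp
  with assms(4) show ?thesis
    unfolding tp_def by auto
qed

lemma eb_agree_assign_vertex:
  assumes "a \<in> V" "a' \<in> V'" "vcol t V E a = vcol t V' E' a'"
  shows "eb_agree t V E V' E' {x} (assign [x] [a]) (assign [x] [a'])"
  using assms by (simp add: eb_agree_def assign_def)

lemma eb_agree_assign_edge:
  assumes g: "graph V E" "graph V' E'" and "E a b" "E' a' b'"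
    and ab: "eb t V E a b = eb t V' E' a' b'" and "x \<noteq> y"
  shows "eb_agree t V E V' E' {x, y} (assign [x, y] [a, b]) (assign [x, y] [a', b'])"
proof -
  have ba: "eb t V E b a = eb t V' E' b' a'"
    by (rule eb_eq_swap[OF ab])
  show ?thesis
    using assms graph_edgeD[OF g(1) \<open>E a b\<close>] graph_edgeD[OF g(2) \<open>E' a' b'\<close>]
      graph_sym[OF g(1) \<open>E a b\<close>] graph_sym[OF g(2) \<open>E' a' b'\<close>]
      vcol_eq_if_eb_eq[OF ab] vcol_eq_if_eb_eq[OF ba] ba
    by (auto simp: eb_agree_def assign_def)
qed

theorem mainTheorem7:
  fixes V :: "'a set" and E :: "'a \<Rightarrow> 'a \<Rightarrow> bool"
    and V' :: "'b set" and E' :: "'b \<Rightarrow> 'b \<Rightarrow> bool"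
    and u v :: 'a and u' v' :: 'b and t :: nat
  assumes "graph V E" and "graph V' E'"
    and "(u, v) \<in> ordered_edges V E" and "(u', v') \<in> ordered_edges V' E'"
  shows "(eb_graph t V E = eb_graph t V' E' \<longrightarrow> tp t V E [] = tp t V' E' [])
       \<and> (eb t V E u v = eb t V' E' u' v' \<and> eb_graph t V E = eb_graph t V' E' \<longrightarrow>
            tp t V E [u] = tp t V' E' [u'] \<and> tp t V E [v] = tp t V' E' [v']
            \<and> tp t V E [u, v] = tp t V' E' [u', v'])"
proof (intro conjI impI)
  note g = assms(1,2)
  from assms(3,4) have uv: "u \<in> V" "v \<in> V" "E u v" and uv': "u' \<in> V'" "v' \<in> V'" "E' u' v'"
    by (simp_all add: ordered_edges_def)
  show "tp t V E [] = tp t V' E' []" if "eb_graph t V E = eb_graph t V' E'"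
    by (rule tp_eq_if_eb_agree[OF g that]) (simp_all add: eb_agree_def)
  assume "eb t V E u v = eb t V' E' u' v' \<and> eb_graph t V E = eb_graph t V' E'"
  then have eq: "eb t V E u v = eb t V' E' u' v'" and geq: "eb_graph t V E = eb_graph t V' E'"
    by simp_all
  show "tp t V E [u] = tp t V' E' [u']"
    by (rule tp_eq_if_eb_agree[OF g geq])
      (auto simp: length_Suc_conv uv uv' vcol_eq_if_eb_eq[OF eq] intro!: eb_agree_assign_vertex)
  show "tp t V E [v] = tp t V' E' [v']"
    by (rule tp_eq_if_eb_agree[OF g geq])
      (auto simp: length_Suc_conv uv uv' vcol_eq_if_eb_eq[OF eb_eq_swap[OF eq]]
        intro!: eb_agree_assign_vertex)
  show "tp t V E [u, v] = tp t V' E' [u', v']"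
    by (rule tp_eq_if_eb_agree[OF g geq])
      (auto simp: length_Suc_conv intro!: eb_agree_assign_edge[OF g uv(3) uv'(3) eq])
qed

end
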